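(* Let $n\ge2$, $\rho\ge0$, and let $\lambda$ be an eigenvalue of $K_n(\rho)=\left[\rho^{|j-k|}\right]_{j,k=1}^n$. Then $\lambda$ is extraordinary iff $|\lambda|>n$.
   Context: Convention $\rho^0=1$. Let $\sigma(\rho,\theta)=\frac{1-\rho^2}{1-2\rho\cos\theta+\rho^2}$ and $\mathrm{range}\{\sigma(\rho,\theta)\}=\{\sigma(\rho,\theta):\theta\in(-\pi,\pi]\}$. For real $\rho\notin\{-1,1\}$, an eigenvalue of $K_n(\rho)$ is called ordinary if it lies in $\mathrm{range}\{\sigma(\rho,\theta)\}$; for $\rho\in\{0,\pm1\}$ all eigenvalues are called ordinary. An eigenvalue is extraordinary if it is not ordinary. *)

theory Defs
  imports Complex_Main "Jordan_Normal_Form.Char_Poly"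
begin

text \<open>Kac--Murdock--Szego matrix K_n(rho) = [rho^|j-k|], indices 0..n-1 (same differences as 1..n).
  Note 0 ^ 0 = 1 in Isabelle, matching the convention rho^0 = 1.\<close>
definition KMS :: "nat \<Rightarrow> real \<Rightarrow> real mat" where
  "KMS n \<rho> = mat n n (\<lambda>(j, k). \<rho> ^ nat \<bar>int j - int k\<bar>)"

definition sigma :: "real \<Rightarrow> real \<Rightarrow> real" where
  "sigma \<rho> \<theta> = (1 - \<rho>\<^sup>2) / (1 - 2 * \<rho> * cos \<theta> + \<rho>\<^sup>2)"

definition sigma_range :: "real \<Rightarrow> real set" where
  "sigma_range \<rho> = {sigma \<rho> \<theta> | \<theta>. \<theta> \<in> {-pi<..pi}}"

definition ordinary :: "real \<Rightarrow> real \<Rightarrow> bool" where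
  "ordinary \<rho> lam = (\<rho> \<in> {0, 1, -1} \<or> lam \<in> sigma_range \<rho>)"

definition extraordinary :: "real \<Rightarrow> real \<Rightarrow> bool" where
  "extraordinary \<rho> lam = (\<not> ordinary \<rho> lam)"

end

theory Submission
  imports Defs
begin

(* The inverse of K_n(\<rho>) is (1 - \<rho>\<^sup>2)\<^sup>-\<^sup>1 times the tridiagonal matrix with diagonal
   (1, 1 + \<rho>\<^sup>2, ..., 1 + \<rho>\<^sup>2, 1) and off-diagonal entries -\<rho>. Hence an eigenvector u for \<lambda>
   satisfies u_(k+1) = 2 c u_k - u_(k-1), where 2 \<rho> c = 1 + \<rho>\<^sup>2 - (1 - \<rho>\<^sup>2) / \<lambda>, so u_k is
   proportional to p_(k+1) for the sequence p_0 = \<rho>, p_1 = 1, and the last row becomes the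
   boundary condition p_(n+1) = \<rho> p_n. The eigenvalue is ordinary exactly when |c| \<le> 1.

   For \<rho> \<le> 1 all entries lie in [0, 1], so |\<lambda>| \<le> n, and the boundary condition has no
   solution with |c| > 1. For \<rho> > 1 write 2 c = z + 1/z when |c| > 1: z < -1 is impossible;
   z > \<rho> makes the eigenvector positive, which forces \<lambda> > n; 1 < z < \<rho> gives \<lambda> < -n by the
   mean value theorem applied to n ln x + ln (\<rho> - x) - ln (\<rho> x - 1). For c = cos t the
   boundary condition says that (n - 1) t - 2 arctan (sin t / (\<rho> - cos t)) is a multiple of \<pi>,
   and the mean value theorem again yields |\<lambda>| \<le> n. *)


section \<open>Eigenvectors of the KMS matrix\<close>

definition KMS_eigen_eq :: "nat \<Rightarrow> real \<Rightarrow> real \<Rightarrow> (nat \<Rightarrow> real) \<Rightarrow> bool" where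
  "KMS_eigen_eq n r lam u \<longleftrightarrow>
     (\<forall>i<n. (\<Sum>j<n. r ^ nat \<bar>int i - int j\<bar> * u j) = lam * u i)"

lemma eigenvalue_KMS_obtain_eigen_eq:
  assumes "eigenvalue (KMS n r) lam"
  obtains u i where "KMS_eigen_eq n r lam u" "i < n" "u i \<noteq> 0"
proof -
  have "dim_row (KMS n r) = n" by (simp add: KMS_def)
  then obtain v where v: "v \<in> carrier_vec n" "v \<noteq> 0\<^sub>v n" "KMS n r *\<^sub>v v = lam \<cdot>\<^sub>v v"
    using assms unfolding eigenvalue_def eigenvector_def by auto
  have "KMS_eigen_eq n r lam (($) v)"
    unfolding KMS_eigen_eq_def
  proof (intro allI impI)
    fix i assume "i < n"
    have "(KMS n r *\<^sub>v v) $ i = (\<Sum>j<n. r ^ nat \<bar>int i - int j\<bar> * v $ j)"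
      using v(1) \<open>i < n\<close> by (simp add: KMS_def scalar_prod_def lessThan_atLeast0)
    then show "(\<Sum>j<n. r ^ nat \<bar>int i - int j\<bar> * v $ j) = lam * v $ i"
      using v \<open>i < n\<close> by simp
  qed
  moreover obtain i where "i < n" "v $ i \<noteq> 0"
    using v(1,2) by (metis carrier_vecD eq_vecI index_zero_vec)
  ultimately show ?thesis using that by blast
qed

lemma KMS_eigen_eq_rescale:
  assumes "KMS_eigen_eq n r lam u" "a \<noteq> 0" "\<And>j. j < n \<Longrightarrow> u j = a * w j"
  shows "KMS_eigen_eq n r lam w"
  unfolding KMS_eigen_eq_def
proof (intro allI impI)
  fix i assume "i < n"
  have "a * (\<Sum>j<n. r ^ nat \<bar>int i - int j\<bar> * w j) = (\<Sum>j<n. r ^ nat \<bar>int i - int j\<bar> * u j)"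
    unfolding sum_distrib_left by (intro sum.cong refl) (simp add: assms(3))
  also have "\<dots> = a * (lam * w i)"
    using assms(1,3) \<open>i < n\<close> by (simp add: KMS_eigen_eq_def)
  finally show "(\<Sum>j<n. r ^ nat \<bar>int i - int j\<bar> * w j) = lam * w i"
    using assms(2) by simp
qed

lemma KMS_eigen_eq_abs_le:
  assumes "0 \<le> r" "r \<le> 1" "KMS_eigen_eq n r lam u" "i0 < n" "u i0 \<noteq> 0"
  shows "\<bar>lam\<bar> \<le> real n"
proof -
  obtain i where "is_arg_min (\<lambda>j. - \<bar>u j\<bar>) (\<lambda>j. j \<in> {..<n}) i"
    using ex_is_arg_min_if_finite[of "{..<n}"] assms(4) by blast
  then have i: "i < n" and max: "\<And>j. j < n \<Longrightarrow> \<bar>u j\<bar> \<le> \<bar>u i\<bar>"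
    by (auto simp: is_arg_min_linorder)
  have "\<bar>lam\<bar> * \<bar>u i\<bar> = \<bar>\<Sum>j<n. r ^ nat \<bar>int i - int j\<bar> * u j\<bar>"
    using assms(3) i by (simp add: KMS_eigen_eq_def abs_mult)
  also have "\<dots> \<le> (\<Sum>j<n. \<bar>u i\<bar>)"
  proof (rule order_trans[OF sum_abs sum_mono])
    fix j assume "j \<in> {..<n}"
    have "r ^ nat \<bar>int i - int j\<bar> \<le> 1" using assms(1,2) by (rule power_le_one)
    then have "(r ^ nat \<bar>int i - int j\<bar>) * \<bar>u j\<bar> \<le> 1 * \<bar>u i\<bar>"
      using max \<open>j \<in> {..<n}\<close> assms(1) by (intro mult_mono) auto
    then show "\<bar>r ^ nat \<bar>int i - int j\<bar> * u j\<bar> \<le> \<bar>u i\<bar>"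
      using assms(1) by (simp add: abs_mult)
  qed
  also have "\<dots> = real n * \<bar>u i\<bar>" by simp
  finally have "\<bar>lam\<bar> * \<bar>u i\<bar> \<le> real n * \<bar>u i\<bar>" .
  moreover have "0 < \<bar>u i\<bar>"
    using max[OF assms(4)] assms(5) by linarith
  ultimately show ?thesis by simp
qed

lemma KMS_eigen_eq_gt_of_pos:
  assumes "1 < r" "2 \<le> n" "KMS_eigen_eq n r lam w" "\<And>j. j < n \<Longrightarrow> 0 < w j"
  shows "real n < lam"
proof -
  obtain i where "is_arg_min w (\<lambda>j. j \<in> {..<n}) i"
    using ex_is_arg_min_if_finite[of "{..<n}"] assms(2) by fastforce
  then have i: "i < n" and min: "\<And>j. j < n \<Longrightarrow> w i \<le> w j"
    by (auto simp: is_arg_min_linorder)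
  define k :: nat where "k = (if i = 0 then 1 else 0)"
  have k: "k < n" "k \<noteq> i" using assms(2) by (auto simp: k_def)
  have "(\<Sum>j<n. w i) < (\<Sum>j<n. r ^ nat \<bar>int i - int j\<bar> * w j)"
  proof (rule sum_strict_mono_ex1)
    show "\<forall>j\<in>{..<n}. w i \<le> r ^ nat \<bar>int i - int j\<bar> * w j"
    proof
      fix j assume "j \<in> {..<n}"
      moreover have "1 \<le> r ^ nat \<bar>int i - int j\<bar>" using assms(1) by simp
      ultimately show "w i \<le> r ^ nat \<bar>int i - int j\<bar> * w j"
        using min[of j] assms(4)[of j] by (smt (verit) lessThan_iff mult_le_cancel_right1)
    qed
    have "1 < r ^ nat \<bar>int i - int k\<bar>" using assms(1) k by simp
    then have "w i < r ^ nat \<bar>int i - int k\<bar> * w k"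
      using min[of k] assms(4)[of k] k by (smt (verit) mult_less_cancel_right1)
    then show "\<exists>j\<in>{..<n}. w i < r ^ nat \<bar>int i - int j\<bar> * w j"
      using k by blast
  qed simp
  then have "real n * w i < lam * w i"
    using assms(3) i by (simp add: KMS_eigen_eq_def)
  then show ?thesis using assms(4)[OF i] by simp
qed

section \<open>The tridiagonal inverse\<close>

(* The tridiagonal matrix T with diagonal (1, 1 + \<rho>\<^sup>2, ..., 1 + \<rho>\<^sup>2, 1) and off-diagonal
   entries -\<rho> satisfies T K_n(\<rho>) = (1 - \<rho>\<^sup>2) I; these are its first, last and interior rows. *)

lemma KMS_coeff_first:
  fixes r :: real
  assumes "i \<le> j"
  shows "(r ^ nat \<bar>int i - int j\<bar>) - r * (r ^ nat \<bar>int (Suc i) - int j\<bar>)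
    = (if j = i then 1 - r\<^sup>2 else 0)"
proof -
  obtain m where "j = i + m" using assms le_Suc_ex by blast
  then show ?thesis
    unfolding nat_abs_int_diff by (cases m) (auto simp: power2_eq_square)
qed

lemma KMS_coeff_last:
  fixes r :: real
  assumes "j \<le> Suc i"
  shows "(r ^ nat \<bar>int (Suc i) - int j\<bar>) - r * (r ^ nat \<bar>int i - int j\<bar>)
    = (if j = Suc i then 1 - r\<^sup>2 else 0)"
proof -
  obtain m where "Suc i = j + m" using assms le_Suc_ex by blast
  then show ?thesis
    unfolding nat_abs_int_diff by (cases m) (auto simp: power2_eq_square)
qed

lemma KMS_coeff_interior:
  fixes r :: real
  shows "(1 + r\<^sup>2) * (r ^ nat \<bar>int (Suc i) - int j\<bar>) - r * (r ^ nat \<bar>int i - int j\<bar>)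
     - r * (r ^ nat \<bar>int (Suc (Suc i)) - int j\<bar>) = (if j = Suc i then 1 - r\<^sup>2 else 0)"
proof -
  consider (below) "j \<le> i" | (diagonal) "j = Suc i" | (above) "Suc (Suc i) \<le> j"
    by linarith
  then show ?thesis
  proof cases
    case below
    then obtain m where "i = j + m" using le_Suc_ex by blast
    then show ?thesis
      unfolding nat_abs_int_diff by (simp add: power2_eq_square algebra_simps)
  next
    case diagonal
    then show ?thesis
      unfolding nat_abs_int_diff by (simp add: power2_eq_square)
  next
    case above
    then obtain m where "j = Suc (Suc i) + m" using le_Suc_ex by blast
    then show ?thesis
      unfolding nat_abs_int_diff by (simp add: power2_eq_square algebra_simps)
  qed
qed

lemma sum_eq_delta:
  fixes u :: "nat \<Rightarrow> real"
  assumes "i < n" "\<And>j. j < n \<Longrightarrow> c j = (if j = i then a else 0)"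
  shows "(\<Sum>j<n. c j * u j) = a * u i"
proof -
  have "(\<Sum>j<n. c j * u j) = (\<Sum>j<n. if j = i then a * u j else 0)"
    using assms(2) by (intro sum.cong) auto
  also have "\<dots> = a * u i" using assms(1) by simp
  finally show ?thesis .
qed

lemma KMS_eigen_eq_tridiagonal:
  fixes r :: real
  assumes eig: "KMS_eigen_eq n r lam u" and n: "n = Suc (Suc m)"
  shows KMS_eigen_eq_first_row: "lam * (u 0 - r * u 1) = (1 - r\<^sup>2) * u 0"
    and KMS_eigen_eq_last_row: "lam * (u (Suc m) - r * u m) = (1 - r\<^sup>2) * u (Suc m)"
    and KMS_eigen_eq_interior_row: "Suc (Suc i) < n \<Longrightarrow>
      lam * ((1 + r\<^sup>2) * u (Suc i) - r * u i - r * u (Suc (Suc i))) = (1 - r\<^sup>2) * u (Suc i)"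
proof -
  define S where "S i = (\<Sum>j<n. r ^ nat \<bar>int i - int j\<bar> * u j)" for i
  have S: "S i = lam * u i" if "i < n" for i
    using eig that by (simp add: KMS_eigen_eq_def S_def)
  have "lam * (u 0 - r * u 1) = S 0 - r * S 1"
    using n by (simp add: S algebra_simps)
  also have "\<dots> = (\<Sum>j<n. ((r ^ nat \<bar>int 0 - int j\<bar>) - r * (r ^ nat \<bar>int (Suc 0) - int j\<bar>)) * u j)"
    unfolding S_def by (simp add: sum_subtractf sum_distrib_left algebra_simps)
  also have "\<dots> = (1 - r\<^sup>2) * u 0"
    using n by (intro sum_eq_delta KMS_coeff_first) auto
  finally show "lam * (u 0 - r * u 1) = (1 - r\<^sup>2) * u 0" .
  have "lam * (u (Suc m) - r * u m) = S (Suc m) - r * S m"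
    using n by (simp add: S algebra_simps)
  also have "\<dots> = (\<Sum>j<n. ((r ^ nat \<bar>int (Suc m) - int j\<bar>) - r * (r ^ nat \<bar>int m - int j\<bar>)) * u j)"
    unfolding S_def by (simp add: sum_subtractf sum_distrib_left algebra_simps)
  also have "\<dots> = (1 - r\<^sup>2) * u (Suc m)"
    using n by (intro sum_eq_delta KMS_coeff_last) auto
  finally show "lam * (u (Suc m) - r * u m) = (1 - r\<^sup>2) * u (Suc m)" .
  assume i: "Suc (Suc i) < n"
  have "lam * ((1 + r\<^sup>2) * u (Suc i) - r * u i - r * u (Suc (Suc i)))
      = (1 + r\<^sup>2) * S (Suc i) - r * S i - r * S (Suc (Suc i))"
    using i by (simp add: S algebra_simps)
  also have "\<dots> = (\<Sum>j<n. ((1 + r\<^sup>2) * (r ^ nat \<bar>int (Suc i) - int j\<bar>) - r * (r ^ nat \<bar>int i - int j\<bar>)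
      - r * (r ^ nat \<bar>int (Suc (Suc i)) - int j\<bar>)) * u j)"
    unfolding S_def by (simp add: sum_subtractf sum.distrib sum_distrib_left algebra_simps)
  also have "\<dots> = (1 - r\<^sup>2) * u (Suc i)"
    using i by (intro sum_eq_delta KMS_coeff_interior) auto
  finally show "lam * ((1 + r\<^sup>2) * u (Suc i) - r * u i - r * u (Suc (Suc i))) = (1 - r\<^sup>2) * u (Suc i)" .
qed

lemma KMS_eigen_eq_eigenvalue_nonzero:
  fixes r :: real
  assumes "KMS_eigen_eq n r lam u" "2 \<le> n" "r\<^sup>2 \<noteq> 1" "i < n" "u i \<noteq> 0"
  shows "lam \<noteq> 0"
proof
  assume "lam = 0"
  obtain m where n: "n = Suc (Suc m)" using assms(2) by (metis add_2_eq_Suc le_Suc_ex)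
  have "u i = 0"
  proof -
    consider "i = 0" | "i = Suc m" | k where "i = Suc k" "k < m"
      using assms(4) n by (cases i) (auto simp: less_Suc_eq)
    then show ?thesis
    proof cases
      case 1
      then show ?thesis using KMS_eigen_eq_first_row[OF assms(1) n] \<open>lam = 0\<close> assms(3) by simp
    next
      case 2
      then show ?thesis using KMS_eigen_eq_last_row[OF assms(1) n] \<open>lam = 0\<close> assms(3) by simp
    next
      case 3
      then show ?thesis
        using KMS_eigen_eq_interior_row[OF assms(1) n, of k] n \<open>lam = 0\<close> assms(3) by simp
    qed
  qed
  with assms(5) show False ..
qed

section \<open>The three-term recurrence\<close>

(* p_k = U_(k-1)(c) - \<rho> U_(k-2)(c) in terms of Chebyshev polynomials of the second kind; the
   value p_0 = \<rho> makes the first row of the tridiagonal system an instance of the recurrence. *)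

fun kms_seq :: "real \<Rightarrow> real \<Rightarrow> nat \<Rightarrow> real" where
  "kms_seq c r 0 = r"
| "kms_seq c r (Suc 0) = 1"
| "kms_seq c r (Suc (Suc k)) = 2 * c * kms_seq c r (Suc k) - kms_seq c r k"

lemma kms_seq_eqI:
  assumes "f 0 = r" "f 1 = 1" "\<And>k. f (Suc (Suc k)) = 2 * c * f (Suc k) - f k"
  shows "kms_seq c r k = f k"
  by (induction k rule: induct_nat_012) (simp_all add: assms(1,3) assms(2)[unfolded One_nat_def])

lemma kms_seq_lincomb:
  fixes f g :: "nat \<Rightarrow> real"
  assumes f: "\<And>k. f (Suc (Suc k)) = 2 * c * f (Suc k) - f k"
    and g: "\<And>k. g (Suc (Suc k)) = 2 * c * g (Suc k) - g k"
    and "(a * f 0 + b * g 0) / d = r" "(a * f 1 + b * g 1) / d = 1"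
  shows "kms_seq c r k = (a * f k + b * g k) / d"
proof (rule kms_seq_eqI)
  have step: "(a * (2 * c * x1 - x0) + b * (2 * c * y1 - y0)) / d
      = 2 * c * ((a * x1 + b * y1) / d) - (a * x0 + b * y0) / d" for x0 x1 y0 y1
    by (cases "d = 0") (simp_all add: field_simps)
  fix k
  show "(a * f (Suc (Suc k)) + b * g (Suc (Suc k))) / d
      = 2 * c * ((a * f (Suc k) + b * g (Suc k)) / d) - (a * f k + b * g k) / d"
    unfolding f g by (rule step)
qed (fact assms)+

lemma kms_seq_one: "kms_seq 1 r k = r + real k * (1 - r)"
  by (rule kms_seq_eqI) (simp_all add: algebra_simps)

lemma kms_seq_cos:
  assumes "sin t \<noteq> 0"
  shows "kms_seq (cos t) r k = (sin (real k * t) - r * sin ((real k - 1) * t)) / sin t"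
proof -
  have step: "sin (x + 2 * t) = 2 * cos t * sin (x + t) - sin x" for x
  proof -
    have "sin ((x + t) + t) + sin ((x + t) - t) = 2 * cos t * sin (x + t)"
      by (simp only: sin_add sin_diff) simp
    then show ?thesis by (simp add: algebra_simps)
  qed
  have "kms_seq (cos t) r k = (1 * sin (real k * t) + (- r) * sin ((real k - 1) * t)) / sin t"
  proof (rule kms_seq_lincomb)
    fix k
    show "sin (real (Suc (Suc k)) * t) = 2 * cos t * sin (real (Suc k) * t) - sin (real k * t)"
      using step[of "real k * t"] by (simp add: algebra_simps)
    show "sin ((real (Suc (Suc k)) - 1) * t)
        = 2 * cos t * sin ((real (Suc k) - 1) * t) - sin ((real k - 1) * t)"
      using step[of "(real k - 1) * t"] by (simp add: algebra_simps)
  qed (use assms in simp_all)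
  then show ?thesis by simp
qed

lemma joukowski_power_recurrence:
  fixes z c :: real
  assumes "z \<noteq> 0" "2 * c = z + 1 / z"
  shows "z ^ Suc (Suc k) = 2 * c * z ^ Suc k - z ^ k"
  unfolding assms(2) using assms(1) by (simp add: field_simps)

lemma kms_seq_joukowski:
  fixes z c r :: real
  assumes z: "z \<noteq> 0" "z\<^sup>2 \<noteq> 1" and c: "2 * c = z + 1 / z"
  shows "kms_seq c r k = ((z - r) * z ^ k + (r * z - 1) * z * (1 / z) ^ k) / (z\<^sup>2 - 1)"
proof (rule kms_seq_lincomb)
  show "z ^ Suc (Suc k) = 2 * c * z ^ Suc k - z ^ k" for k
    by (rule joukowski_power_recurrence[OF z(1) c])
  have "2 * c = 1 / z + 1 / (1 / z)" using c by simp
  then show "(1 / z) ^ Suc (Suc k) = 2 * c * (1 / z) ^ Suc k - (1 / z) ^ k" for k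
    using z by (intro joukowski_power_recurrence) simp_all
  have "z\<^sup>2 - 1 \<noteq> 0" using z by simp
  then show "((z - r) * z ^ 0 + (r * z - 1) * z * (1 / z) ^ 0) / (z\<^sup>2 - 1) = r"
    and "((z - r) * z ^ 1 + (r * z - 1) * z * (1 / z) ^ 1) / (z\<^sup>2 - 1) = 1"
    using z by (simp_all add: field_simps power2_eq_square)
qed

lemma kms_seq_pos:
  fixes z c r :: real
  assumes "1 < r" "r < z" "2 * c = z + 1 / z"
  shows "0 < kms_seq c r k"
proof -
  have "1 < z" using assms by simp
  then have "1 < z\<^sup>2" by (simp add: power2_eq_square less_1_mult)
  then have z: "1 < z" "z\<^sup>2 \<noteq> 1" "0 < z\<^sup>2 - 1"
    using \<open>1 < z\<close> by linarith+
  have "0 < (z - r) * z ^ k" "0 < (r * z - 1) * z * (1 / z) ^ k"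
    using assms z(1) less_1_mult[of r z] by simp_all
  then show ?thesis
    using z by (simp add: kms_seq_joukowski[OF _ z(2) assms(3)])
qed

lemma three_term_eq_kms_seq:
  fixes u :: "nat \<Rightarrow> real"
  assumes r: "r \<noteq> 0" and mu: "mu = 1 + r\<^sup>2 - 2 * r * c"
    and first: "u 0 - r * u 1 = mu * u 0"
    and interior: "\<And>i. Suc (Suc i) < n \<Longrightarrow>
      (1 + r\<^sup>2) * u (Suc i) - r * u i - r * u (Suc (Suc i)) = mu * u (Suc i)"
  shows "i < n \<Longrightarrow> u i = u 0 * kms_seq c r (Suc i)"
proof (induction i rule: induct_nat_012)
  case 0
  then show ?case by simp
next
  case 1
  have "r * u 1 = (1 - mu) * u 0"
    using first by (simp add: left_diff_distrib)
  also have "\<dots> = r * ((2 * c - r) * u 0)"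
    unfolding mu by (simp add: algebra_simps power2_eq_square)
  finally show ?case using r by simp
next
  case (ge2 i)
  have "r * u (Suc (Suc i)) = (1 + r\<^sup>2 - mu) * u (Suc i) - r * u i"
    using interior[OF ge2.prems] by (simp add: algebra_simps)
  also have "\<dots> = r * (2 * c * u (Suc i) - u i)"
    unfolding mu by (simp add: algebra_simps)
  finally have "u (Suc (Suc i)) = 2 * c * u (Suc i) - u i"
    using r by simp
  also have "\<dots> = u 0 * (2 * c * kms_seq c r (Suc (Suc i)) - kms_seq c r (Suc i))"
    using ge2 by (simp add: algebra_simps del: kms_seq.simps)
  also have "\<dots> = u 0 * kms_seq c r (Suc (Suc (Suc i)))"
    by (simp only: kms_seq.simps(3))
  finally show ?case .
qed

lemma three_term_boundary_kms_seq:
  fixes u :: "nat \<Rightarrow> real"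
  assumes r: "r \<noteq> 0" and mu: "mu = 1 + r\<^sup>2 - 2 * r * c"
    and last: "u (Suc m) - r * u m = mu * u (Suc m)"
    and u: "u m = a * kms_seq c r (Suc m)" "u (Suc m) = a * kms_seq c r (Suc (Suc m))"
    and "a \<noteq> 0"
  shows "kms_seq c r (Suc (Suc (Suc m))) = r * kms_seq c r (Suc (Suc m))"
proof -
  define p1 p2 where "p1 = kms_seq c r (Suc m)" and "p2 = kms_seq c r (Suc (Suc m))"
  have "a * (p2 - r * p1) = a * (mu * p2)"
    using last unfolding u p1_def p2_def by (simp add: algebra_simps del: kms_seq.simps)
  then have last_p: "p2 - r * p1 = mu * p2"
    using \<open>a \<noteq> 0\<close> by simp
  have "r * kms_seq c r (Suc (Suc (Suc m))) = r * (2 * c * p2 - p1)"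
    by (simp only: kms_seq.simps(3) p1_def p2_def)
  also have "\<dots> = (1 + r\<^sup>2 - mu) * p2 - r * p1"
    unfolding mu by (simp add: algebra_simps)
  also have "\<dots> = r * (r * p2) + ((p2 - r * p1) - mu * p2)"
    by (simp add: algebra_simps power2_eq_square)
  also have "\<dots> = r * (r * p2)"
    by (simp add: last_p)
  finally show ?thesis
    using r by (simp add: p2_def del: kms_seq.simps)
qed

lemma KMS_eigen_eq_kms_seq:
  fixes r :: real
  assumes n: "2 \<le> n" and r: "0 < r" "r \<noteq> 1"
    and eig: "KMS_eigen_eq n r lam u" and "i < n" "u i \<noteq> 0"
  obtains c where "lam \<noteq> 0" "lam = (1 - r\<^sup>2) / (1 + r\<^sup>2 - 2 * r * c)"
    "kms_seq c r (Suc n) = r * kms_seq c r n"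
    "KMS_eigen_eq n r lam (\<lambda>j. kms_seq c r (Suc j))"
proof -
  have r2: "r\<^sup>2 \<noteq> 1" using r by (simp add: power2_eq_1_iff)
  have lam: "lam \<noteq> 0" by (rule KMS_eigen_eq_eigenvalue_nonzero[OF eig n r2 assms(5,6)])
  obtain m where m: "n = Suc (Suc m)" using n by (metis add_2_eq_Suc le_Suc_ex)
  \<comment> \<open>the eigenvalue of the tridiagonal matrix for the same eigenvector\<close>
  define mu where "mu = (1 - r\<^sup>2) / lam"
  define c where "c = (1 + r\<^sup>2 - mu) / (2 * r)"
  have mu_c: "mu = 1 + r\<^sup>2 - 2 * r * c" using r by (simp add: c_def)
  have div: "X = mu * Y" if "lam * X = (1 - r\<^sup>2) * Y" for X Y
    using that lam by (simp add: mu_def field_simps)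
  have r0: "r \<noteq> 0" using r by simp
  have first: "u 0 - r * u 1 = mu * u 0"
    by (rule div[OF KMS_eigen_eq_first_row[OF eig m]])
  have interior: "(1 + r\<^sup>2) * u (Suc i) - r * u i - r * u (Suc (Suc i)) = mu * u (Suc i)"
    if "Suc (Suc i) < n" for i
    by (rule div[OF KMS_eigen_eq_interior_row[OF eig m that]])
  have last: "u (Suc m) - r * u m = mu * u (Suc m)"
    by (rule div[OF KMS_eigen_eq_last_row[OF eig m]])
  have u: "u j = u 0 * kms_seq c r (Suc j)" if "j < n" for j
    by (rule three_term_eq_kms_seq[where u = u, OF r0 mu_c first interior that])
  have u0: "u 0 \<noteq> 0" using u assms(5,6) by force
  have "kms_seq c r (Suc (Suc (Suc m))) = r * kms_seq c r (Suc (Suc m))"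
    using m by (intro three_term_boundary_kms_seq[where u = u, OF r0 mu_c last _ _ u0] u) simp_all
  then have "kms_seq c r (Suc n) = r * kms_seq c r n"
    by (simp only: m)
  moreover have "KMS_eigen_eq n r lam (\<lambda>j. kms_seq c r (Suc j))"
    using eig u0 u by (rule KMS_eigen_eq_rescale)
  moreover have "lam = (1 - r\<^sup>2) / (1 + r\<^sup>2 - 2 * r * c)"
    using lam r2 by (simp add: mu_c[symmetric] mu_def)
  ultimately show ?thesis using that lam by blast
qed

section \<open>The boundary condition\<close>

lemma joukowski_preimage:
  fixes c :: real
  assumes "1 < c"
  obtains z where "1 < z" "2 * c = z + 1 / z"
proof
  define s where "s = sqrt (c\<^sup>2 - 1)"
  have "1 < c\<^sup>2" using assms by (simp add: power2_eq_square less_1_mult)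
  then have s: "0 \<le> s" "s\<^sup>2 = c\<^sup>2 - 1"
    by (auto simp: s_def)
  show "1 < c + s" using assms s by linarith
  have "(c + s) * (c - s) = 1" using s by (simp add: power2_eq_square algebra_simps)
  then show "2 * c = (c + s) + 1 / (c + s)"
    using \<open>1 < c + s\<close> by (simp add: field_simps)
qed

lemma kms_seq_joukowski_boundary:
  fixes z c r :: real
  assumes z: "z \<noteq> 0" "z\<^sup>2 \<noteq> 1" and c: "2 * c = z + 1 / z"
    and boundary: "kms_seq c r (Suc n) = r * kms_seq c r n"
  shows "z ^ (2 * n) * (z - r)\<^sup>2 = (r * z - 1)\<^sup>2"
proof -
  define a b where "a = z ^ n" and "b = (1 / z) ^ n"
  have ab: "a * b = 1" using z by (simp add: a_def b_def flip: power_mult_distrib)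
  have "kms_seq c r (Suc n) = ((z - r) * z * a + (r * z - 1) * b) / (z\<^sup>2 - 1)"
    unfolding kms_seq_joukowski[OF z c] a_def b_def using z by (simp add: power_Suc)
  moreover have "kms_seq c r n = ((z - r) * a + (r * z - 1) * z * b) / (z\<^sup>2 - 1)"
    unfolding kms_seq_joukowski[OF z c] a_def b_def by simp
  ultimately have "(z - r) * z * a + (r * z - 1) * b = r * ((z - r) * a + (r * z - 1) * z * b)"
    using boundary z by (simp add: field_simps)
  then have "(z - r)\<^sup>2 * a = (r * z - 1)\<^sup>2 * b"
    by (simp add: algebra_simps power2_eq_square)
  then have "(z - r)\<^sup>2 * (a * a) = (r * z - 1)\<^sup>2 * (a * b)"
    by (simp add: algebra_simps)
  then have "(z - r)\<^sup>2 * (a * a) = (r * z - 1)\<^sup>2"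
    by (simp only: ab mult_1_right)
  moreover have "a * a = z ^ (2 * n)"
    unfolding a_def by (simp add: mult_2 power_add)
  ultimately show ?thesis
    by (metis mult.commute)
qed

lemma kms_seq_boundary_below_minus_one:
  fixes c r :: real
  assumes "c < -1" "0 \<le> r" "1 \<le> n"
  shows "kms_seq c r (Suc n) \<noteq> r * kms_seq c r n"
proof
  assume boundary: "kms_seq c r (Suc n) = r * kms_seq c r n"
  obtain s where s: "1 < s" "2 * (- c) = s + 1 / s"
    using assms(1) by (auto intro: joukowski_preimage[of "- c"])
  have "1 < s\<^sup>2" using s by (simp add: power2_eq_square less_1_mult)
  then have "(- s)\<^sup>2 \<noteq> 1" by (metis power2_minus less_irrefl)
  moreover have "2 * c = - s + 1 / - s" using s by simp
  ultimately have "(- s) ^ (2 * n) * (- s - r)\<^sup>2 = (r * (- s) - 1)\<^sup>2"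
    using s by (intro kms_seq_joukowski_boundary[OF _ _ _ boundary]) auto
  then have eq: "s ^ (2 * n) * (s + r)\<^sup>2 = (r * s + 1)\<^sup>2"
    by (simp add: power2_eq_square algebra_simps)
  have "(r * s + 1)\<^sup>2 < (s * (s + r))\<^sup>2"
    using s assms(2) less_1_mult[of s s] by (intro power_strict_mono) (auto simp: algebra_simps)
  also have "\<dots> = s\<^sup>2 * (s + r)\<^sup>2"
    by (simp add: power_mult_distrib)
  also have "\<dots> \<le> s ^ (2 * n) * (s + r)\<^sup>2"
    using s assms(3) by (intro mult_right_mono power_increasing) auto
  finally show False
    using eq by simp
qed

lemma kms_seq_boundary_above_one:
  fixes c r :: real
  assumes "1 < c" "0 \<le> r" "r < 1" "1 \<le> n"
  shows "kms_seq c r (Suc n) \<noteq> r * kms_seq c r n"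
proof
  assume boundary: "kms_seq c r (Suc n) = r * kms_seq c r n"
  obtain z where z: "1 < z" "2 * c = z + 1 / z"
    using joukowski_preimage[OF assms(1)] by blast
  have "1 < z\<^sup>2" using z by (simp add: power2_eq_square less_1_mult)
  then have "z\<^sup>2 \<noteq> 1" by linarith
  then have eq: "z ^ (2 * n) * (z - r)\<^sup>2 = (r * z - 1)\<^sup>2"
    using z by (intro kms_seq_joukowski_boundary[OF _ _ _ boundary]) auto
  have "(z - r)\<^sup>2 - (r * z - 1)\<^sup>2 = (1 - r\<^sup>2) * (z\<^sup>2 - 1)"
    by (simp add: power2_eq_square algebra_simps)
  moreover have "r\<^sup>2 < 1" using assms(2,3) by (simp add: abs_square_less_1)
  ultimately have "(r * z - 1)\<^sup>2 < (z - r)\<^sup>2"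
    using \<open>1 < z\<^sup>2\<close> by (smt (verit) mult_pos_pos)
  also have "\<dots> \<le> z ^ (2 * n) * (z - r)\<^sup>2"
    using z mult_right_mono[of 1 "z ^ (2 * n)" "(z - r)\<^sup>2"] by simp
  finally show False
    using eq by simp
qed

lemma has_real_derivative_ln_joukowski:
  fixes a r x :: real
  assumes "0 < x" "x < r" "1 < r * x"
  shows "((\<lambda>x. a * ln x + ln (r - x) - ln (r * x - 1)) has_real_derivative
      (a + (1 - r\<^sup>2) / (1 + r\<^sup>2 - r * (x + 1 / x))) / x) (at x)"
proof -
  have mu: "1 + r\<^sup>2 - r * (x + 1 / x) = (r - x) * (r * x - 1) / x"
    using assms(1) by (simp add: field_simps power2_eq_square)
  have "r - x \<noteq> 0" "r * x - 1 \<noteq> 0"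
    using assms by simp_all
  then have "1 / (r - x) + r / (r * x - 1) = (r\<^sup>2 - 1) / ((r - x) * (r * x - 1))"
    by (simp add: add_frac_eq power2_eq_square algebra_simps)
  moreover have "(1 - r\<^sup>2) / (1 + r\<^sup>2 - r * (x + 1 / x)) / x
      = - ((r\<^sup>2 - 1) / ((r - x) * (r * x - 1)))"
    unfolding mu using assms by (simp add: minus_divide_left)
  ultimately have "a / x - 1 / (r - x) - r / (r * x - 1)
      = (a + (1 - r\<^sup>2) / (1 + r\<^sup>2 - r * (x + 1 / x))) / x"
    unfolding add_divide_distrib by (simp add: diff_diff_eq)
  moreover have "((\<lambda>x. a * ln x + ln (r - x) - ln (r * x - 1)) has_real_derivative
      a / x - 1 / (r - x) - r / (r * x - 1)) (at x)"
    using assms by (auto intro!: derivative_eq_intros simp: field_simps)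
  ultimately show ?thesis by metis
qed

lemma joukowski_boundary_eigenvalue_lt:
  fixes z r :: real
  assumes z: "1 < z" "z < r" and eq: "z ^ n * (r - z) = r * z - 1"
  shows "(1 - r\<^sup>2) / (1 + r\<^sup>2 - r * (z + 1 / z)) < - real n"
proof -
  define mu where "mu x = 1 + r\<^sup>2 - r * (x + 1 / x)" for x
  define g where "g x = real n * ln x + ln (r - x) - ln (r * x - 1)" for x
  have r: "1 < r" using z by simp
  have pos: "0 < x" "x < r" "1 < r * x" if "1 \<le> x" "x \<le> z" for x
    using that z mult_less_le_imp_less[of 1 r 1 x] r by auto
  have "(g has_real_derivative (real n + (1 - r\<^sup>2) / mu x) / x) (at x)"
    if "1 \<le> x" "x \<le> z" for x
    unfolding g_def[abs_def] mu_def using pos[OF that] by (rule has_real_derivative_ln_joukowski)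
  then obtain \<xi> where \<xi>: "1 < \<xi>" "\<xi> < z" "g z - g 1 = (z - 1) * ((real n + (1 - r\<^sup>2) / mu \<xi>) / \<xi>)"
    using MVT2[OF z(1), of g "\<lambda>x. (real n + (1 - r\<^sup>2) / mu x) / x"] by blast
  have "g 1 = 0" by (simp add: g_def)
  moreover have "g z = 0"
    using eq pos[of z] z by (simp add: g_def ln_mult_pos ln_realpow flip: eq)
  ultimately have lam_xi: "(1 - r\<^sup>2) / mu \<xi> = - real n"
    using \<xi> z by simp
  have "mu \<xi> - mu z = r * (z - \<xi>) * (1 - 1 / (\<xi> * z))"
    using \<xi> z by (simp add: mu_def field_simps)
  moreover have "1 / (\<xi> * z) < 1"
    using \<xi> z less_1_mult[of \<xi> z] by simp
  ultimately have "mu z < mu \<xi>"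
    using \<xi> r by (smt (verit) mult_pos_pos)
  moreover have "0 < mu z"
  proof -
    have "0 < (r - z) * (r * z - 1) / z"
      using pos[of z] z by (intro divide_pos_pos mult_pos_pos) auto
    also have "\<dots> = mu z"
      using z by (simp add: mu_def field_simps power2_eq_square)
    finally show ?thesis .
  qed
  moreover have "1 - r\<^sup>2 < 0"
    using r by (simp add: power2_eq_square less_1_mult)
  ultimately have "(1 - r\<^sup>2) / mu z < (1 - r\<^sup>2) / mu \<xi>"
    by (intro divide_strict_left_mono_neg) auto
  then show ?thesis
    unfolding lam_xi by (simp add: mu_def)
qed

lemma KMS_denominator_pos:
  fixes r c :: real
  assumes "\<bar>c\<bar> \<le> 1" "0 \<le> r" "r \<noteq> 1"
  shows "0 < 1 + r\<^sup>2 - 2 * r * c"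
proof -
  have "1 + r\<^sup>2 - 2 * r * c = (r - c)\<^sup>2 + (1 - c\<^sup>2)"
    by (simp add: power2_eq_square algebra_simps)
  moreover have "0 \<le> 1 - c\<^sup>2" using assms(1) by (simp add: abs_square_le_1)
  moreover have "0 < (r - c)\<^sup>2 \<or> 0 < 1 - c\<^sup>2"
  proof (cases "c = r")
    case True
    then have "\<bar>c\<bar> < 1" using assms by auto
    then show ?thesis by (simp add: abs_square_less_1)
  qed simp
  ultimately show ?thesis
    by (smt (verit) zero_le_power2)
qed

lemma arctan_div_cos_sin:
  fixes a b :: real
  assumes "0 < a"
  shows "cos (arctan (b / a)) = a / sqrt (a\<^sup>2 + b\<^sup>2)"
    and "sin (arctan (b / a)) = b / sqrt (a\<^sup>2 + b\<^sup>2)"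
proof -
  have "sqrt (1 + (b / a)\<^sup>2) = sqrt (a\<^sup>2 + b\<^sup>2) / a"
    using assms by (simp add: power_divide field_simps real_sqrt_divide)
  then show "cos (arctan (b / a)) = a / sqrt (a\<^sup>2 + b\<^sup>2)"
    and "sin (arctan (b / a)) = b / sqrt (a\<^sup>2 + b\<^sup>2)"
    using assms by (simp_all add: cos_arctan sin_arctan)
qed

lemma sin_three_term_phase:
  fixes r t x :: real
  assumes "1 < r"
  shows "sin (x + 2 * t) - 2 * r * sin (x + t) + r\<^sup>2 * sin x
    = (1 + r\<^sup>2 - 2 * r * cos t) * sin (x - 2 * arctan (sin t / (r - cos t)))"
proof -
  define a b where "a = r - cos t" and "b = sin t"
  define R where "R = sqrt (a\<^sup>2 + b\<^sup>2)"
  have "0 < a" unfolding a_def using assms cos_le_one[of t] by linarith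
  then have "0 < R" by (simp add: R_def add_pos_nonneg)
  have Rab: "R\<^sup>2 = a\<^sup>2 + b\<^sup>2" by (simp add: R_def)
  also have "\<dots> = 1 + r\<^sup>2 - 2 * r * cos t"
    unfolding a_def b_def using sin_cos_squared_add[of t]
    by (simp add: power2_eq_square algebra_simps)
  finally have R2: "R\<^sup>2 = 1 + r\<^sup>2 - 2 * r * cos t" .
  define \<phi> where "\<phi> = arctan (b / a)"
  have C: "R * cos \<phi> = a" and S: "R * sin \<phi> = b"
    using \<open>0 < R\<close> arctan_div_cos_sin[OF \<open>0 < a\<close>, of b] by (simp_all add: \<phi>_def R_def)
  have "R\<^sup>2 * sin (x - 2 * \<phi>)
      = sin x * ((R * cos \<phi>)\<^sup>2 - (R * sin \<phi>)\<^sup>2) - cos x * (2 * (R * cos \<phi>) * (R * sin \<phi>))"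
    unfolding sin_diff sin_double cos_double by (simp add: power2_eq_square algebra_simps)
  also have "\<dots> = sin x * (a\<^sup>2 - b\<^sup>2) - cos x * (2 * a * b)"
    by (simp only: C S)
  also have "\<dots> = sin (x + 2 * t) - 2 * r * sin (x + t) + r\<^sup>2 * sin x"
    unfolding a_def b_def sin_add sin_double cos_double
    by (simp add: power2_eq_square algebra_simps)
  finally show ?thesis
    unfolding R2 \<phi>_def a_def b_def ..
qed

lemma has_real_derivative_arctan_phase:
  fixes r x :: real
  assumes "1 < r"
  shows "((\<lambda>x. arctan (sin x / (r - cos x))) has_real_derivative
      (r * cos x - 1) / (1 + r\<^sup>2 - 2 * r * cos x)) (at x)"
proof -
  define a where "a = r - cos x"
  have "0 < a" unfolding a_def using assms cos_le_one[of x] by linarith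
  have "((\<lambda>x. arctan (sin x / (r - cos x))) has_real_derivative
      inverse (1 + (sin x / a)\<^sup>2) * ((cos x * a - sin x * sin x) / a\<^sup>2)) (at x)"
    unfolding a_def using \<open>0 < a\<close>
    by (auto intro!: derivative_eq_intros simp: a_def power2_eq_square field_simps)
  moreover have "inverse (1 + (sin x / a)\<^sup>2) = a\<^sup>2 / (a\<^sup>2 + (sin x)\<^sup>2)"
    using \<open>0 < a\<close> by (simp add: power_divide field_simps)
  moreover have "cos x * a - sin x * sin x = r * cos x - 1"
    "a\<^sup>2 + (sin x)\<^sup>2 = 1 + r\<^sup>2 - 2 * r * cos x"
    unfolding a_def using sin_cos_squared_add[of x] by (simp_all add: power2_eq_square algebra_simps)
  ultimately show ?thesis
    using \<open>0 < a\<close> by simp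
qed

lemma three_term_phase_nonneg:
  fixes r t :: real
  assumes r: "1 < r" and n: "1 \<le> n" and t: "0 \<le> t"
    and E: "sin ((real n + 1) * t) - 2 * r * sin (real n * t) + r\<^sup>2 * sin ((real n - 1) * t) = 0"
  shows "0 \<le> (real n - 1) * t - 2 * arctan (sin t / (r - cos t))"
proof -
  define h where "h = (real n - 1) * t - 2 * arctan (sin t / (r - cos t))"
  have "(real n - 1) * t + 2 * t = (real n + 1) * t" "(real n - 1) * t + t = real n * t"
    by (simp_all add: algebra_simps)
  then have "(1 + r\<^sup>2 - 2 * r * cos t) * sin h = 0"
    using sin_three_term_phase[OF r, of "(real n - 1) * t" t] E by (simp add: h_def)
  moreover have "0 < 1 + r\<^sup>2 - 2 * r * cos t"
    using KMS_denominator_pos[of "cos t" r] r by simp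
  ultimately have "sin h = 0" by simp
  then obtain i :: int where i: "h = of_int i * pi"
    by (auto simp: sin_zero_iff_int2)
  have "0 \<le> (real n - 1) * t" using n t by simp
  then have "(- 1) * pi < of_int i * pi"
    using arctan_ubound[of "sin t / (r - cos t)"] unfolding i[symmetric] h_def by linarith
  then have "- 1 < real_of_int i"
    by (simp only: mult_less_cancel_right_pos[OF pi_gt_zero])
  then show ?thesis
    using i by (simp add: h_def)
qed

lemma sin_three_term_zero_bound:
  fixes r t :: real
  assumes r: "1 < r" and n: "1 \<le> n" and t: "0 < t" "t < pi"
    and E: "sin ((real n + 1) * t) - 2 * r * sin (real n * t) + r\<^sup>2 * sin ((real n - 1) * t) = 0"
  shows "(r\<^sup>2 - 1) / (1 + r\<^sup>2 - 2 * r * cos t) < real n"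
proof -
  define mu where "mu x = 1 + r\<^sup>2 - 2 * r * cos x" for x
  define h where "h x = (real n - 1) * x - 2 * arctan (sin x / (r - cos x))" for x
  have mu_pos: "0 < mu x" for x
    unfolding mu_def using KMS_denominator_pos[of "cos x" r] r by simp
  have "(h has_real_derivative real n - (r\<^sup>2 - 1) / mu x) (at x)" for x
  proof -
    have "(h has_real_derivative (real n - 1) - 2 * ((r * cos x - 1) / mu x)) (at x)"
      unfolding h_def mu_def
      by (intro DERIV_diff DERIV_cmult DERIV_cmult_Id has_real_derivative_arctan_phase r)
    moreover have "(real n - 1) - 2 * ((r * cos x - 1) / mu x) = real n - (r\<^sup>2 - 1) / mu x"
      using mu_pos[of x] by (simp add: mu_def field_simps)
    ultimately show ?thesis by metis
  qed
  then obtain \<xi> where \<xi>: "0 < \<xi>" "\<xi> < t" "h t - h 0 = (t - 0) * (real n - (r\<^sup>2 - 1) / mu \<xi>)"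
    using MVT2[OF t(1), of h "\<lambda>x. real n - (r\<^sup>2 - 1) / mu x"] by blast
  moreover have "h 0 = 0" by (simp add: h_def)
  moreover have "0 \<le> h t"
    unfolding h_def using three_term_phase_nonneg[OF r n _ E] t by simp
  ultimately have "(r\<^sup>2 - 1) / mu \<xi> \<le> real n"
    using t(1) by (simp add: zero_le_mult_iff)
  moreover have "mu \<xi> < mu t"
    using cos_monotone_0_pi[of \<xi> t] \<xi> t r by (simp add: mu_def)
  moreover have "0 < r\<^sup>2 - 1"
    using r by (simp add: power2_eq_square less_1_mult)
  ultimately show ?thesis
    using mu_pos[of \<xi>] by (smt (verit) divide_strict_left_mono mu_def mult_pos_pos)
qed

lemma kms_seq_boundary_cos_bound:
  fixes r c :: real
  assumes r: "1 < r" and n: "1 \<le> n" and c: "\<bar>c\<bar> \<le> 1"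
    and boundary: "kms_seq c r (Suc n) = r * kms_seq c r n"
  shows "(r\<^sup>2 - 1) / (1 + r\<^sup>2 - 2 * r * c) \<le> real n"
proof -
  have pos: "0 < 1 + r\<^sup>2 - 2 * r * c"
    using r c by (intro KMS_denominator_pos) auto
  have "-1 \<le> c" "c \<le> 1" using c by (simp_all add: abs_le_iff)
  then consider (minus_one) "c = -1" | (one) "c = 1" | (interior) "-1 < c" "c < 1"
    by fastforce
  then show ?thesis
  proof cases
    case minus_one
    have "r\<^sup>2 - 1 \<le> 1 + r\<^sup>2 - 2 * r * c"
      using minus_one r by simp
    then have "(r\<^sup>2 - 1) / (1 + r\<^sup>2 - 2 * r * c) \<le> 1"
      using pos by simp
    then show ?thesis using n by linarith
  next
    case one
    have "r + real (Suc n) * (1 - r) = r * (r + real n * (1 - r))"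
      using boundary by (simp only: one kms_seq_one)
    then have "r\<^sup>2 - 1 = real n * (1 + r\<^sup>2 - 2 * r * c)"
      by (simp add: one power2_eq_square algebra_simps)
    then show ?thesis using pos by simp
  next
    case interior
    define t where "t = arccos c"
    have t: "cos t = c" "0 < t" "t < pi" "sin t \<noteq> 0"
      using interior arccos_lt_bounded[of c] sin_arccos_nonzero[of c] by (auto simp: t_def)
    have "(sin (real (Suc n) * t) - r * sin ((real (Suc n) - 1) * t)) / sin t
        = r * ((sin (real n * t) - r * sin ((real n - 1) * t)) / sin t)"
      using boundary by (simp only: kms_seq_cos[OF t(4)] flip: t(1))
    then have "sin ((real n + 1) * t) - 2 * r * sin (real n * t) + r\<^sup>2 * sin ((real n - 1) * t) = 0"
      using t(4) by (simp add: field_simps power2_eq_square)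
    then show ?thesis
      using sin_three_term_zero_bound[OF r n t(2,3)] t(1) by simp
  qed
qed

section \<open>Ordinary and extraordinary eigenvalues\<close>

lemma mem_sigma_range_iff:
  fixes r c :: real
  assumes "0 < r" "r \<noteq> 1"
  shows "(1 - r\<^sup>2) / (1 + r\<^sup>2 - 2 * r * c) \<in> sigma_range r \<longleftrightarrow> \<bar>c\<bar> \<le> 1"
proof
  assume "(1 - r\<^sup>2) / (1 + r\<^sup>2 - 2 * r * c) \<in> sigma_range r"
  then obtain t where "(1 - r\<^sup>2) / (1 + r\<^sup>2 - 2 * r * c) = (1 - r\<^sup>2) / (1 - 2 * r * cos t + r\<^sup>2)"
    by (auto simp: sigma_range_def sigma_def)
  moreover have "1 - r\<^sup>2 \<noteq> 0"
    using assms by (simp add: power2_eq_1_iff)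
  ultimately have "r * c = r * cos t"
    by simp
  then show "\<bar>c\<bar> \<le> 1"
    using assms(1) by simp
next
  assume c: "\<bar>c\<bar> \<le> 1"
  have "0 \<le> arccos c" "arccos c \<le> pi"
    using c arccos_lbound arccos_ubound by (auto simp: abs_le_iff)
  moreover have "- pi < arccos c"
    using calculation(1) pi_gt_zero by linarith
  ultimately have range: "arccos c \<in> {-pi<..pi}"
    by simp
  have "(1 - r\<^sup>2) / (1 + r\<^sup>2 - 2 * r * c) = sigma r (arccos c)"
    using c by (simp add: sigma_def cos_arccos_abs algebra_simps)
  then show "(1 - r\<^sup>2) / (1 + r\<^sup>2 - 2 * r * c) \<in> sigma_range r"
    using range unfolding sigma_range_def by blast
qed

lemma kms_seq_eigenvalue_abs_gt:
  fixes r c lam :: real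
  assumes n: "2 \<le> n" and r: "1 < r" and c: "1 < c"
    and lam0: "lam \<noteq> 0" and lam: "lam = (1 - r\<^sup>2) / (1 + r\<^sup>2 - 2 * r * c)"
    and boundary: "kms_seq c r (Suc n) = r * kms_seq c r n"
    and eigen: "KMS_eigen_eq n r lam (\<lambda>j. kms_seq c r (Suc j))"
  shows "real n < \<bar>lam\<bar>"
proof -
  obtain z where z: "1 < z" "2 * c = z + 1 / z"
    using joukowski_preimage[OF c] by blast
  have "2 * r * c = r * (z + 1 / z)"
    using z(2) by (simp flip: z(2))
  then have lam_z: "lam = (1 - r\<^sup>2) / (1 + r\<^sup>2 - r * (z + 1 / z))"
    unfolding lam by simp
  consider "z = r" | "z < r" | "r < z" by linarith
  then show ?thesis
  proof cases
    case 1
    then have "1 + r\<^sup>2 - r * (z + 1 / z) = 0"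
      using r by (simp add: field_simps power2_eq_square)
    then show ?thesis using lam0 lam_z by simp
  next
    case 2
    have "1 < z\<^sup>2" using z by (simp add: power2_eq_square less_1_mult)
    then have "z\<^sup>2 \<noteq> 1" by linarith
    then have "z ^ (2 * n) * (z - r)\<^sup>2 = (r * z - 1)\<^sup>2"
      using z by (intro kms_seq_joukowski_boundary[OF _ _ _ boundary]) auto
    then have "(z ^ n * (r - z))\<^sup>2 = (r * z - 1)\<^sup>2"
      by (simp add: power_mult_distrib power2_eq_square algebra_simps flip: power_add mult_2)
    moreover have "0 \<le> z ^ n * (r - z)" "0 \<le> r * z - 1"
      using z 2 less_1_mult[of r z] r by simp_all
    ultimately have "z ^ n * (r - z) = r * z - 1"
      by (simp add: power2_eq_iff_nonneg)
    then have "lam < - real n"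
      unfolding lam_z using joukowski_boundary_eigenvalue_lt[OF z(1) 2] by blast
    then show ?thesis by simp
  next
    case 3
    have "real n < lam"
      using KMS_eigen_eq_gt_of_pos[OF r n eigen] kms_seq_pos[OF r 3 z(2)] by blast
    then show ?thesis by simp
  qed
qed

lemma kms_seq_eigenvalue_abs_le:
  fixes r c lam :: real
  assumes n: "1 \<le> n" and r: "1 < r" and c: "\<bar>c\<bar> \<le> 1"
    and lam: "lam = (1 - r\<^sup>2) / (1 + r\<^sup>2 - 2 * r * c)"
    and boundary: "kms_seq c r (Suc n) = r * kms_seq c r n"
  shows "\<bar>lam\<bar> \<le> real n"
proof -
  have den: "0 < 1 + r\<^sup>2 - 2 * r * c"
    using r c by (intro KMS_denominator_pos) auto
  have num: "1 - r\<^sup>2 < 0"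
    using r by (simp add: power2_eq_square less_1_mult)
  have "\<bar>lam\<bar> = (r\<^sup>2 - 1) / (1 + r\<^sup>2 - 2 * r * c)"
    unfolding lam abs_divide abs_of_pos[OF den] abs_of_neg[OF num] by simp
  then show ?thesis
    using kms_seq_boundary_cos_bound[OF r n c boundary] by simp
qed

lemma KMS_eigenvalue_in_sigma_range_iff:
  fixes r lam :: real
  assumes n: "2 \<le> n" and r: "1 < r" and eig: "KMS_eigen_eq n r lam u" "i < n" "u i \<noteq> 0"
  shows "lam \<in> sigma_range r \<longleftrightarrow> \<bar>lam\<bar> \<le> real n"
proof -
  obtain c where lam0: "lam \<noteq> 0" and lam: "lam = (1 - r\<^sup>2) / (1 + r\<^sup>2 - 2 * r * c)"
    and boundary: "kms_seq c r (Suc n) = r * kms_seq c r n"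
    and eigen: "KMS_eigen_eq n r lam (\<lambda>j. kms_seq c r (Suc j))"
    using KMS_eigen_eq_kms_seq[OF n _ _ eig] r by auto
  have "\<bar>lam\<bar> \<le> real n" if "\<bar>c\<bar> \<le> 1"
    using kms_seq_eigenvalue_abs_le[OF _ r that lam boundary] n by simp
  moreover have "real n < \<bar>lam\<bar>" if "1 < c"
    using kms_seq_eigenvalue_abs_gt[OF n r that lam0 lam boundary eigen] .
  moreover have "\<not> c < -1"
    using kms_seq_boundary_below_minus_one[of c r n] boundary r n by auto
  moreover have "lam \<in> sigma_range r \<longleftrightarrow> \<bar>c\<bar> \<le> 1"
    using mem_sigma_range_iff[of r c] r lam by simp
  ultimately show ?thesis
    by (smt (verit))
qed

lemma KMS_eigenvalue_ordinary_of_le_one: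
  fixes r lam :: real
  assumes n: "2 \<le> n" and r: "0 \<le> r" "r \<le> 1" and eig: "KMS_eigen_eq n r lam u" "i < n" "u i \<noteq> 0"
  shows "ordinary r lam"
proof (cases "r = 0 \<or> r = 1")
  case True
  then show ?thesis by (auto simp: ordinary_def)
next
  case False
  then have r': "0 < r" "r < 1" using r by auto
  obtain c where lam: "lam = (1 - r\<^sup>2) / (1 + r\<^sup>2 - 2 * r * c)"
    and boundary: "kms_seq c r (Suc n) = r * kms_seq c r n"
    using KMS_eigen_eq_kms_seq[OF n r'(1) _ eig] r' by auto
  have "\<not> c < -1"
    using kms_seq_boundary_below_minus_one[of c r n] boundary r n by auto
  moreover have "\<not> 1 < c"
    using kms_seq_boundary_above_one[of c r n] boundary r r' n by auto
  ultimately have "\<bar>c\<bar> \<le> 1" by auto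
  then show ?thesis
    using mem_sigma_range_iff[of r c] r' lam by (simp add: ordinary_def)
qed

theorem corollary6p9:
  fixes n :: nat and \<rho> lam :: real
  assumes "n \<ge> 2" and "\<rho> \<ge> 0"
    and "eigenvalue (KMS n \<rho>) lam"
  shows "extraordinary \<rho> lam \<longleftrightarrow> \<bar>lam\<bar> > real n"
proof -
  obtain u i where eig: "KMS_eigen_eq n \<rho> lam u" "i < n" "u i \<noteq> 0"
    using eigenvalue_KMS_obtain_eigen_eq[OF assms(3)] by blast
  show ?thesis
  proof (cases "\<rho> \<le> 1")
    case True
    then show ?thesis
      using KMS_eigen_eq_abs_le[OF assms(2) True eig]
        KMS_eigenvalue_ordinary_of_le_one[OF assms(1,2) True eig]
      by (simp add: extraordinary_def)
  next
    case False
    then show ?thesis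
      using KMS_eigenvalue_in_sigma_range_iff[OF assms(1) _ eig]
      by (auto simp: extraordinary_def ordinary_def)
  qed
qed

end
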